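(* Let $k$ be a field of characteristic $p>0$, $S=k[[x_1,\dots,x_n]]$, and let $I=I_{\alpha_1}\cap\cdots\cap I_{\alpha_s}$ be the minimal primary decomposition of a squarefree monomial ideal $I\subseteq S$ into face ideals. Then for every $q=p^e$, $e\ge 0$, $$(I^{[q]}:_S I)=\big(I_{\alpha_1}^{[q]}+(({\bf x}^{\alpha_1})^{q-1})\big)\cap\cdots\cap\big(I_{\alpha_s}^{[q]}+(({\bf x}^{\alpha_s})^{q-1})\big).$$
   Context: For $\alpha\in\{0,1\}^n$, the face ideal is $I_\alpha=\langle x_i:\alpha_i\ne0\rangle$ and ${\bf x}^\alpha=x_1^{\alpha_1}\cdots x_n^{\alpha_n}$. A squarefree monomial ideal is an ideal generated by monomials ${\bf x}^\alpha$ with $\alpha\in\{0,1\}^n$; its minimal primary decomposition is an irredundant intersection of face ideals. $J^{[q]}$ denotes the ideal generated by $q$-th powers of elements of $J$. *)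

theory Defs
  imports Main
begin

text \<open>The formal power series ring S = k[[x_0,...,x_{n-1}]] (variables indexed 0..n-1).
  A power series is its coefficient function on exponent vectors (nat => nat);
  the carrier ps_carrier n consists of those coefficient functions vanishing on every
  exponent vector that involves a variable index >= n.\<close>

type_synonym 'a mps = "(nat \<Rightarrow> nat) \<Rightarrow> 'a"

definition ps_carrier :: "nat \<Rightarrow> ('a::zero) mps set" where
  "ps_carrier n = {f. \<forall>a. (\<exists>i\<ge>n. a i \<noteq> 0) \<longrightarrow> f a = 0}"

definition ps_zero :: "('a::zero) mps" where
  "ps_zero = (\<lambda>_. 0)"

definition ps_add :: "('a::plus) mps \<Rightarrow> 'a mps \<Rightarrow> 'a mps" where
  "ps_add f g = (\<lambda>c. f c + g c)"

definition ps_mult :: "('a::comm_semiring_1) mps \<Rightarrow> 'a mps \<Rightarrow> 'a mps" where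
  "ps_mult f g = (\<lambda>c. \<Sum>a\<in>{a. \<forall>i. a i \<le> c i}. f a * g (\<lambda>i. c i - a i))"

definition ps_monom :: "(nat \<Rightarrow> nat) \<Rightarrow> ('a::zero_neq_one) mps" where
  "ps_monom a = (\<lambda>c. if c = a then 1 else 0)"

definition ps_one :: "('a::zero_neq_one) mps" where
  "ps_one = ps_monom (\<lambda>_. 0)"

definition ps_var :: "nat \<Rightarrow> ('a::zero_neq_one) mps" where
  "ps_var i = ps_monom (\<lambda>j. if j = i then 1 else 0)"

primrec ps_pow :: "('a::comm_semiring_1) mps \<Rightarrow> nat \<Rightarrow> 'a mps" where
  "ps_pow f 0 = ps_one"
| "ps_pow f (Suc m) = ps_mult f (ps_pow f m)"

definition ps_is_ideal :: "nat \<Rightarrow> ('a::comm_semiring_1) mps set \<Rightarrow> bool" where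
  "ps_is_ideal n J \<longleftrightarrow> J \<subseteq> ps_carrier n \<and> ps_zero \<in> J
     \<and> (\<forall>f\<in>J. \<forall>g\<in>J. ps_add f g \<in> J)
     \<and> (\<forall>r\<in>ps_carrier n. \<forall>f\<in>J. ps_mult r f \<in> J)"

definition ps_ideal :: "nat \<Rightarrow> ('a::comm_semiring_1) mps set \<Rightarrow> 'a mps set" where
  "ps_ideal n G = \<Inter>{J. G \<subseteq> J \<and> ps_is_ideal n J}"

definition ps_ideal_sum :: "nat \<Rightarrow> ('a::comm_semiring_1) mps set \<Rightarrow> 'a mps set \<Rightarrow> 'a mps set" where
  "ps_ideal_sum n J K = ps_ideal n (J \<union> K)"

definition ps_colon :: "nat \<Rightarrow> ('a::comm_semiring_1) mps set \<Rightarrow> 'a mps set \<Rightarrow> 'a mps set" where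
  "ps_colon n J I = {f \<in> ps_carrier n. \<forall>g\<in>I. ps_mult f g \<in> J}"

definition ps_frob :: "nat \<Rightarrow> nat \<Rightarrow> ('a::comm_semiring_1) mps set \<Rightarrow> 'a mps set" where
  "ps_frob n q J = ps_ideal n {ps_pow f q | f. f \<in> J}"

text \<open>alpha in {0,1}^n, encoded as an exponent vector supported on {0..n-1}.\<close>
definition is01 :: "nat \<Rightarrow> (nat \<Rightarrow> nat) \<Rightarrow> bool" where
  "is01 n \<alpha> \<longleftrightarrow> (\<forall>i. \<alpha> i \<le> 1) \<and> (\<forall>i\<ge>n. \<alpha> i = 0)"

definition face_ideal :: "nat \<Rightarrow> (nat \<Rightarrow> nat) \<Rightarrow> ('a::comm_semiring_1) mps set" where
  "face_ideal n \<alpha> = ps_ideal n {ps_var i | i. i < n \<and> \<alpha> i \<noteq> 0}"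

definition sqfree_monomial_ideal :: "nat \<Rightarrow> ('a::comm_semiring_1) mps set \<Rightarrow> bool" where
  "sqfree_monomial_ideal n I \<longleftrightarrow>
     (\<exists>G. (\<forall>\<alpha>\<in>G. is01 n \<alpha>) \<and> I = ps_ideal n (ps_monom ` G))"

text \<open>Intersection of a family of ideals of S (the empty intersection is S itself).\<close>
definition ps_Inter :: "nat \<Rightarrow> ('a::zero) mps set set \<Rightarrow> 'a mps set" where
  "ps_Inter n F = ps_carrier n \<inter> \<Inter>F"

end

theory Submission
  imports Defs "HOL-Library.FuncSet" "HOL-Computational_Algebra.Primes"
begin

text \<open>In \<open>k[[x\<^sub>1,\<dots>,x\<^sub>n]]\<close> the monomial ideals are exactly the sets of series supported on an
  up-closed set of exponents, and the ideal operations in the statement act on these exponent sets: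
  sums by union, intersections by intersection, \<open>(J : I)\<close> by \<open>{c. c + G \<subseteq> U}\<close> for generators
  \<open>G\<close> of \<open>I\<close>, and \<open>J\<^sup>[\<^sup>q\<^sup>]\<close> by scaling the generators of \<open>J\<close> by \<open>q\<close>, because in characteristic
  \<open>p\<close> the coefficient of \<open>f\<^sup>q\<close> at \<open>c\<close> vanishes unless \<open>c = q d\<close> with \<open>f\<^sub>d \<noteq> 0\<close> (freshman's
  dream). The proposition thus becomes an identity of exponent sets: \<open>x\<^sup>c x\<^sup>m \<in> I\<^sup>[\<^sup>q\<^sup>]\<close> for all
  squarefree generators \<open>x\<^sup>m\<close> of \<open>I\<close> iff for every face \<open>\<alpha>\<close> either some variable of \<open>\<alpha>\<close>
  has degree \<open>\<ge> q\<close> in \<open>x\<^sup>c\<close> or \<open>(x\<^sup>\<alpha>)\<^sup>q\<^sup>-\<^sup>1\<close> divides \<open>x\<^sup>c\<close>. For the harder direction, irredundancy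
  provides a squarefree monomial lying in every face ideal but \<open>I\<^sub>\<alpha>\<close>.\<close>

section \<open>Exponent vectors and the multiplication of power series\<close>

definition finite_support :: "(nat \<Rightarrow> nat) \<Rightarrow> bool" where
  "finite_support c \<longleftrightarrow> finite {i. c i \<noteq> 0}"

abbreviation exps_le :: "(nat \<Rightarrow> nat) \<Rightarrow> (nat \<Rightarrow> nat) set" where
  "exps_le c \<equiv> {a. \<forall>i. a i \<le> c i}"

lemma finite_exps_le:
  assumes "finite_support c" shows "finite (exps_le c)"
proof -
  let ?S = "{i. c i \<noteq> 0}"
  let ?ext = "\<lambda>g i. if i \<in> ?S then g i else 0"
  have "exps_le c \<subseteq> ?ext ` PiE ?S (\<lambda>i. {..c i})"
  proof
    fix a assume a: "a \<in> exps_le c"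
    then have "a = ?ext (restrict a ?S)"
      by (auto simp: fun_eq_iff) (metis le_zero_eq)
    moreover have "restrict a ?S \<in> PiE ?S (\<lambda>i. {..c i})"
      using a by auto
    ultimately show "a \<in> ?ext ` PiE ?S (\<lambda>i. {..c i})" by blast
  qed
  moreover have "finite (PiE ?S (\<lambda>i. {..c i}))"
    using assms unfolding finite_support_def by (intro finite_PiE) auto
  ultimately show ?thesis by (meson finite_imageI finite_subset)
qed

lemma infinite_exps_le:
  assumes "\<not> finite_support c" shows "infinite (exps_le c)"
proof
  assume fin: "finite (exps_le c)"
  let ?h = "\<lambda>j i. if i = j then c j else 0"
  have "inj_on ?h {i. c i \<noteq> 0}" and "?h ` {i. c i \<noteq> 0} \<subseteq> exps_le c"
    by (auto simp: inj_on_def fun_eq_iff)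
  then have "finite {i. c i \<noteq> 0}"
    using fin by (meson finite_imageD finite_subset)
  then show False using assms by (simp add: finite_support_def)
qed

lemma finite_support_le:
  assumes "finite_support c" "a \<in> exps_le c" shows "finite_support a"
proof -
  have "\<forall>i. a i \<le> c i"
    using assms(2) by simp
  then have "{i. a i \<noteq> 0} \<subseteq> {i. c i \<noteq> 0}"
    by (metis (mono_tags) Collect_mono le_0_eq)
  then show ?thesis
    using assms(1) unfolding finite_support_def by (rule finite_subset)
qed

lemma finite_support_diff:
  "\<not> finite_support c \<Longrightarrow> finite_support d \<Longrightarrow> \<not> finite_support (\<lambda>i. c i - d i)"
proof
  assume "\<not> finite_support c" "finite_support d" "finite_support (\<lambda>i. c i - d i)"
  then have "finite ({i. c i - d i \<noteq> 0} \<union> {i. d i \<noteq> 0})"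
    unfolding finite_support_def by auto
  moreover have "{i. c i \<noteq> 0} \<subseteq> {i. c i - d i \<noteq> 0} \<union> {i. d i \<noteq> 0}"
    by auto
  ultimately show False
    using \<open>\<not> finite_support c\<close> unfolding finite_support_def by (meson finite_subset)
qed

lemma finite_support_scale: "finite_support d \<Longrightarrow> finite_support (\<lambda>i. k * d i)"
  unfolding finite_support_def by (erule finite_subset[rotated]) auto

lemma finite_support_zero [simp]: "finite_support (\<lambda>_. 0)"
  by (simp add: finite_support_def)

definition ps_term :: "'a::zero \<Rightarrow> (nat \<Rightarrow> nat) \<Rightarrow> 'a mps" where
  "ps_term a d = (\<lambda>c. if c = d then a else 0)"

lemma ps_term_eq_zero_iff: "ps_term a d = (\<lambda>_. 0) \<longleftrightarrow> a = 0"
proof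
  assume "ps_term a d = (\<lambda>_. 0)"
  then have "ps_term a d d = 0" by simp
  then show "a = 0" by (simp add: ps_term_def)
qed (simp add: ps_term_def)

lemma ps_monom_eq_term: "ps_monom d = ps_term 1 d"
  unfolding ps_monom_def ps_term_def by simp

lemma ps_one_eq_term: "ps_one = ps_term 1 (\<lambda>_. 0)"
  unfolding ps_one_def ps_monom_eq_term ..

lemma ps_mult_nonzeroD:
  assumes "ps_mult f g c \<noteq> 0"
  obtains a where "a \<in> exps_le c" "f a \<noteq> 0" "g (\<lambda>i. c i - a i) \<noteq> 0"
proof -
  from assms obtain a where "a \<in> exps_le c" "f a * g (\<lambda>i. c i - a i) \<noteq> 0"
    unfolding ps_mult_def by (rule sum.not_neutral_contains_not_neutral)
  with that mult_not_zero show ?thesis by blast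
qed

lemma ps_mult_vanishes_below:
  "(\<And>a. a \<in> exps_le c \<Longrightarrow> f a = 0) \<Longrightarrow> ps_mult f g c = 0"
  by (simp add: ps_mult_def)

text \<open>Exponents of infinite support have infinitely many divisors, so the Cauchy product is
  an infinite sum there, which is \<open>0\<close> by the convention for \<open>sum\<close>.\<close>
lemma ps_mult_infinite_support: "\<not> finite_support c \<Longrightarrow> ps_mult f g c = 0"
  unfolding ps_mult_def using infinite_exps_le by simp

lemma ps_mult_commute: "ps_mult f g = ps_mult g (f :: 'a :: comm_semiring_1 mps)"
proof
  fix c
  show "ps_mult f g c = ps_mult g f c"
    unfolding ps_mult_def
    by (rule sum.reindex_bij_witness[where i="\<lambda>a i. c i - a i" and j="\<lambda>a i. c i - a i"])
       (auto simp: mult.commute)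
qed

text \<open>Splitting \<open>c = b + d + e\<close> first as \<open>(b + d) + e\<close> or first as \<open>b + (d + e)\<close>.\<close>
lemma sum_exps_le_nested_swap:
  assumes "finite_support c"
  shows "(\<Sum>a\<in>exps_le c. \<Sum>b\<in>exps_le a. h b (\<lambda>i. a i - b i) (\<lambda>i. c i - a i)) =
         (\<Sum>b\<in>exps_le c. \<Sum>d\<in>exps_le (\<lambda>i. c i - b i). h b d (\<lambda>i. c i - b i - d i))"
proof -
  have fin: "finite (exps_le a)" if "a \<in> exps_le c" for a
    using finite_support_le[OF assms that] by (rule finite_exps_le)
  have fin': "finite (exps_le (\<lambda>i. c i - b i))" for b
    by (rule finite_exps_le, rule finite_support_le[OF assms]) auto
  have "(\<Sum>a\<in>exps_le c. \<Sum>b\<in>exps_le a. h b (\<lambda>i. a i - b i) (\<lambda>i. c i - a i)) =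
        (\<Sum>(a, b)\<in>(SIGMA a:exps_le c. exps_le a). h b (\<lambda>i. a i - b i) (\<lambda>i. c i - a i))"
    using fin by (intro sum.Sigma finite_exps_le[OF assms]) blast
  also have "\<dots> = (\<Sum>(b, d)\<in>(SIGMA b:exps_le c. exps_le (\<lambda>i. c i - b i)). h b d (\<lambda>i. c i - b i - d i))"
  proof (rule sum.reindex_bij_witness[where i="\<lambda>(b, d). (\<lambda>i. b i + d i, b)"
                                         and j="\<lambda>(a, b). (b, \<lambda>i. a i - b i)"])
    fix p assume "p \<in> (SIGMA a:exps_le c. exps_le a)"
    then obtain a b where p: "p = (a, b)" and ba: "\<forall>i. b i \<le> a i" and ac: "\<forall>i. a i \<le> c i"
      by auto
    have le: "b i \<le> c i \<and> a i - b i \<le> c i - b i" for i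
      using ba[rule_format, of i] ac[rule_format, of i] by arith
    have diff: "(\<lambda>i. c i - b i - (a i - b i)) = (\<lambda>i. c i - a i)"
      using ba by (simp add: fun_eq_iff)
    show "(\<lambda>(b, d). (\<lambda>i. b i + d i, b)) ((\<lambda>(a, b). (b, \<lambda>i. a i - b i)) p) = p"
      using ba by (simp add: p fun_eq_iff)
    show "(\<lambda>(a, b). (b, \<lambda>i. a i - b i)) p \<in> (SIGMA b:exps_le c. exps_le (\<lambda>i. c i - b i))"
      using le by (simp add: p)
    show "(\<lambda>(b, d). h b d (\<lambda>i. c i - b i - d i)) ((\<lambda>(a, b). (b, \<lambda>i. a i - b i)) p) =
          (\<lambda>(a, b). h b (\<lambda>i. a i - b i) (\<lambda>i. c i - a i)) p"
      by (simp only: p prod.case diff)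
  next
    fix p assume "p \<in> (SIGMA b:exps_le c. exps_le (\<lambda>i. c i - b i))"
    then obtain b d where p: "p = (b, d)" and bc: "\<forall>i. b i \<le> c i" and dc: "\<forall>i. d i \<le> c i - b i"
      by auto
    have le: "b i + d i \<le> c i \<and> b i \<le> b i + d i" for i
      using bc[rule_format, of i] dc[rule_format, of i] by arith
    show "(\<lambda>(a, b). (b, \<lambda>i. a i - b i)) ((\<lambda>(b, d). (\<lambda>i. b i + d i, b)) p) = p"
      by (simp add: p)
    show "(\<lambda>(b, d). (\<lambda>i. b i + d i, b)) p \<in> (SIGMA a:exps_le c. exps_le a)"
      using le by (simp add: p)
  qed
  also have "\<dots> = (\<Sum>b\<in>exps_le c. \<Sum>d\<in>exps_le (\<lambda>i. c i - b i). h b d (\<lambda>i. c i - b i - d i))"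
    using fin' by (intro sum.Sigma[symmetric] finite_exps_le[OF assms]) blast
  finally show ?thesis .
qed

lemma ps_mult_assoc: "ps_mult (ps_mult f g) h = ps_mult f (ps_mult g (h :: 'a :: comm_semiring_1 mps))"
proof
  fix c
  show "ps_mult (ps_mult f g) h c = ps_mult f (ps_mult g h) c"
  proof (cases "finite_support c")
    case True
    have "ps_mult (ps_mult f g) h c =
        (\<Sum>a\<in>exps_le c. \<Sum>b\<in>exps_le a. f b * g (\<lambda>i. a i - b i) * h (\<lambda>i. c i - a i))"
      unfolding ps_mult_def by (simp add: sum_distrib_right)
    also have "\<dots> = (\<Sum>b\<in>exps_le c. \<Sum>d\<in>exps_le (\<lambda>i. c i - b i). f b * g d * h (\<lambda>i. c i - b i - d i))"
      using True by (rule sum_exps_le_nested_swap)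
    also have "\<dots> = ps_mult f (ps_mult g h) c"
      unfolding ps_mult_def by (simp add: sum_distrib_left mult.assoc)
    finally show ?thesis .
  qed (simp add: ps_mult_infinite_support)
qed

definition finite_support_series :: "('a::zero) mps set" where
  "finite_support_series = {f. \<forall>c. \<not> finite_support c \<longrightarrow> f c = 0}"

lemma ps_mult_in_finite_support_series: "ps_mult f g \<in> finite_support_series"
  unfolding finite_support_series_def by (simp add: ps_mult_infinite_support)

lemma ps_term_in_finite_support_series: "finite_support d \<Longrightarrow> ps_term a d \<in> finite_support_series"
  unfolding finite_support_series_def ps_term_def by auto

lemma ps_mult_term_right:
  assumes f: "f \<in> finite_support_series" and d: "finite_support d"
  shows "ps_mult f (ps_term b d) c =
    (if \<forall>i. d i \<le> c i then f (\<lambda>i. c i - d i) * (b :: 'a :: comm_semiring_1) else 0)"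
proof (cases "finite_support c")
  case False
  then have "\<not> finite_support (\<lambda>i. c i - d i)"
    using finite_support_diff d by blast
  then show ?thesis
    using False f by (simp add: ps_mult_infinite_support finite_support_series_def)
next
  case True
  have "(\<lambda>i. c i - a i) = d \<longleftrightarrow> a = (\<lambda>i. c i - d i) \<and> (\<forall>i. d i \<le> c i)" if "a \<in> exps_le c" for a
    using that by (auto simp: fun_eq_iff) (metis diff_diff_cancel diff_le_self)+
  then have "ps_mult f (ps_term b d) c =
      (\<Sum>a\<in>exps_le c. if a = (\<lambda>i. c i - d i) then (if \<forall>i. d i \<le> c i then f a * b else 0) else 0)"
    unfolding ps_mult_def ps_term_def by (intro sum.cong) auto
  also have "\<dots> = (if \<forall>i. d i \<le> c i then f (\<lambda>i. c i - d i) * b else 0)"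
    using finite_exps_le[OF True] by (subst sum.delta) auto
  finally show ?thesis .
qed

lemma ps_mult_terms:
  assumes "finite_support d" "finite_support d'"
  shows "ps_mult (ps_term a d) (ps_term b d') = ps_term (a * b :: 'a :: comm_semiring_1) (\<lambda>i. d i + d' i)"
proof
  fix c
  have "(\<forall>i. d' i \<le> c i) \<and> (\<lambda>i. c i - d' i) = d \<longleftrightarrow> c = (\<lambda>i. d i + d' i)"
    by (auto simp: fun_eq_iff) (metis le_add_diff_inverse2)+
  moreover have "ps_mult (ps_term a d) (ps_term b d') c =
      (if \<forall>i. d' i \<le> c i then ps_term a d (\<lambda>i. c i - d' i) * b else 0)"
    using assms by (intro ps_mult_term_right ps_term_in_finite_support_series)
  ultimately show "ps_mult (ps_term a d) (ps_term b d') c = ps_term (a * b) (\<lambda>i. d i + d' i) c"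
    by (auto simp: ps_term_def)
qed

lemma ps_mult_one: "f \<in> finite_support_series \<Longrightarrow> ps_mult f ps_one = (f :: 'a :: comm_semiring_1 mps)"
  by (rule ext) (simp add: ps_one_eq_term ps_mult_term_right)

lemma ps_pow_term:
  "finite_support d \<Longrightarrow> ps_pow (ps_term a d) k = ps_term (a ^ k :: 'a :: comm_semiring_1) (\<lambda>i. k * d i)"
  by (induction k) (simp_all add: ps_one_eq_term ps_mult_terms finite_support_scale)

lemma ps_pow_monom:
  "finite_support d \<Longrightarrow> ps_pow (ps_monom d) k = (ps_monom (\<lambda>i. k * d i) :: 'a :: comm_semiring_1 mps)"
  by (simp add: ps_monom_eq_term ps_pow_term)

section \<open>Frobenius powers of power series\<close>

text \<open>Series vanishing on exponents of infinite support form a commutative semiring; this gives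
  access to the library's freshman's dream.\<close>

typedef (overloaded) ('a::comm_semiring_1) fseries = "finite_support_series :: 'a mps set"
  by (rule exI[of _ "\<lambda>_. 0"]) (simp add: finite_support_series_def)

setup_lifting type_definition_fseries

instantiation fseries :: (comm_semiring_1) comm_semiring_1
begin

lift_definition zero_fseries :: "'a fseries" is "\<lambda>_. 0"
  by (simp add: finite_support_series_def)

lift_definition one_fseries :: "'a fseries" is ps_one
  by (simp add: ps_one_eq_term ps_term_in_finite_support_series)

lift_definition plus_fseries :: "'a fseries \<Rightarrow> 'a fseries \<Rightarrow> 'a fseries" is ps_add
  by (simp add: finite_support_series_def ps_add_def)

lift_definition times_fseries :: "'a fseries \<Rightarrow> 'a fseries \<Rightarrow> 'a fseries" is ps_mult
  by (rule ps_mult_in_finite_support_series)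

instance
proof
  fix a b c :: "'a fseries"
  show "a * b * c = a * (b * c)"
    by transfer (rule ps_mult_assoc)
  show "a * b = b * a"
    by transfer (rule ps_mult_commute)
  show "1 * a = a"
    by transfer (simp add: ps_mult_commute[of ps_one] ps_mult_one)
  show "a + b + c = a + (b + c)"
    by transfer (simp add: ps_add_def add.assoc)
  show "a + b = b + a"
    by transfer (simp add: ps_add_def add.commute)
  show "0 + a = a"
    by transfer (simp add: ps_add_def)
  show "0 * a = 0"
    by transfer (simp add: ps_mult_def)
  show "a * 0 = 0"
    by transfer (simp add: ps_mult_def)
  show "(a + b) * c = a * c + b * c"
    by transfer (simp add: ps_add_def ps_mult_def sum.distrib distrib_right)
  show "(0::'a fseries) \<noteq> 1"
    by transfer (simp add: ps_one_eq_term ps_term_eq_zero_iff eq_commute[of "\<lambda>_. 0"])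
qed

end

lemma Rep_fseries_sum: "Rep_fseries (sum F D) = (\<lambda>c. \<Sum>d\<in>D. Rep_fseries (F d) c)"
  by (induction D rule: infinite_finite_induct)
     (simp_all add: zero_fseries.rep_eq plus_fseries.rep_eq ps_add_def)

lemma Rep_fseries_power: "Rep_fseries (f ^ k) = ps_pow (Rep_fseries f) k"
  by (induction k) (simp_all add: one_fseries.rep_eq times_fseries.rep_eq)

lemma Rep_Abs_term: "finite_support d \<Longrightarrow> Rep_fseries (Abs_fseries (ps_term a d)) = ps_term a d"
  by (simp add: Abs_fseries_inverse ps_term_in_finite_support_series)

lemma CHAR_fseries: "CHAR('a::comm_semiring_1 fseries) = CHAR('a)"
proof -
  have "Rep_fseries (of_nat m :: 'a fseries) = ps_term (of_nat m) (\<lambda>_. 0)" for m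
    by (induction m)
       (auto simp: zero_fseries.rep_eq plus_fseries.rep_eq one_fseries.rep_eq ps_one_eq_term
                   ps_add_def ps_term_def)
  then have "(of_nat m :: 'a fseries) = 0 \<longleftrightarrow> (of_nat m :: 'a) = 0" for m
    by (simp add: Rep_fseries_inject[symmetric] zero_fseries.rep_eq ps_term_eq_zero_iff)
  then show ?thesis
    by (intro CHAR_eqI) (simp_all add: of_nat_eq_0_iff_char_dvd)
qed

lemma Abs_fseries_term_power:
  "finite_support d \<Longrightarrow>
    Abs_fseries (ps_term a d) ^ k = Abs_fseries (ps_term (a ^ k) (\<lambda>i. k * d i))"
  by (simp add: Rep_fseries_inject[symmetric] Rep_fseries_power Rep_Abs_term ps_pow_term
                finite_support_scale)

lemma Rep_fseries_power_vanishes_below: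
  assumes "\<forall>a\<in>exps_le c. Rep_fseries r a = 0" "k > 0"
  shows "Rep_fseries (r ^ k) c = 0"
  using assms by (cases k) (auto simp: times_fseries.rep_eq intro!: ps_mult_vanishes_below)

text \<open>The coefficient of \<open>f\<^sup>q\<close> at \<open>c\<close> only depends on the finitely many coefficients of \<open>f\<close>
  at divisors of \<open>x\<^sup>c\<close>; on that finite truncation the freshman's dream applies.\<close>
lemma ps_pow_char_power_coeff:
  fixes f :: "'a::comm_semiring_1 mps" and e :: nat
  assumes f: "f \<in> finite_support_series" and p: "prime CHAR('a)" and c: "finite_support c"
  defines "q \<equiv> CHAR('a) ^ e"
  shows "ps_pow f q c = (\<Sum>d\<in>exps_le c. ps_term (f d ^ q) (\<lambda>i. q * d i) c)"
proof -
  have fin_le: "finite_support d" if "d \<in> exps_le c" for d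
    using finite_support_le[OF c that] .
  define trunc where "trunc = (\<Sum>d\<in>exps_le c. Abs_fseries (ps_term (f d) d))"
  define rest where "rest = (\<lambda>a. if a \<in> exps_le c then 0 else f a)"
  have rest: "rest \<in> finite_support_series"
    using f by (auto simp: rest_def finite_support_series_def)
  have "Rep_fseries trunc = (\<lambda>a. \<Sum>d\<in>exps_le c. ps_term (f d) d a)"
    unfolding trunc_def Rep_fseries_sum by (intro ext sum.cong) (simp_all add: Rep_Abs_term fin_le)
  then have "Rep_fseries trunc a + rest a = f a" for a
    using finite_exps_le[OF c] by (simp add: rest_def ps_term_def)
  then have f_split: "Abs_fseries f = trunc + Abs_fseries rest"
    using f rest by (simp add: Rep_fseries_inject[symmetric] plus_fseries.rep_eq Abs_fseries_inverse
                               ps_add_def fun_eq_iff)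
  have "q > 0"
    using p by (simp add: q_def prime_gt_0_nat)
  then have rest_vanishes: "Rep_fseries (Abs_fseries rest ^ q) c = 0"
    using rest by (intro Rep_fseries_power_vanishes_below) (simp add: Abs_fseries_inverse rest_def)
  have trunc_power: "trunc ^ q = (\<Sum>d\<in>exps_le c. Abs_fseries (ps_term (f d ^ q) (\<lambda>i. q * d i)))"
    unfolding trunc_def using p
    by (simp add: freshmans_dream_sum' CHAR_fseries q_def)
       (intro sum.cong, simp_all add: Abs_fseries_term_power fin_le)
  have "ps_pow f q c = Rep_fseries (Abs_fseries f ^ q) c"
    using f by (simp add: Rep_fseries_power Abs_fseries_inverse)
  also have "\<dots> = Rep_fseries (trunc ^ q + Abs_fseries rest ^ q) c"
    using p by (simp add: f_split freshmans_dream' CHAR_fseries q_def)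
  also have "\<dots> = Rep_fseries (trunc ^ q) c"
    using rest_vanishes by (simp add: plus_fseries.rep_eq ps_add_def)
  also have "\<dots> = (\<Sum>d\<in>exps_le c. ps_term (f d ^ q) (\<lambda>i. q * d i) c)"
    unfolding trunc_power Rep_fseries_sum
    by (intro sum.cong) (simp_all add: Rep_Abs_term fin_le finite_support_scale)
  finally show ?thesis .
qed

lemma ps_pow_char_power_nonzeroD:
  fixes f :: "'a::comm_semiring_1 mps"
  assumes f: "f \<in> finite_support_series" and p: "prime CHAR('a)"
    and nz: "ps_pow f (CHAR('a) ^ e) c \<noteq> 0"
  obtains d where "c = (\<lambda>i. CHAR('a) ^ e * d i)" "f d \<noteq> 0"
proof -
  define q where "q = CHAR('a) ^ e"
  have "q > 0"
    using p by (simp add: q_def prime_gt_0_nat)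
  then have "ps_pow f q = ps_mult f (ps_pow f (q - 1))"
    by (cases q) simp_all
  then have "finite_support c"
    using nz ps_mult_infinite_support unfolding q_def by metis
  then obtain d where "ps_term (f d ^ q) (\<lambda>i. q * d i) c \<noteq> 0"
    using nz ps_pow_char_power_coeff[OF f p] unfolding q_def by (metis (no_types, lifting) sum.neutral)
  then have "c = (\<lambda>i. q * d i)" "f d \<noteq> 0"
    using \<open>q > 0\<close> by (auto simp: ps_term_def zero_power split: if_splits)
  then show thesis
    using that unfolding q_def by blast
qed

section \<open>Monomial ideals as sets of exponents\<close>

definition exps :: "nat \<Rightarrow> (nat \<Rightarrow> nat) set" where
  "exps n = {c. \<forall>i\<ge>n. c i = 0}"

text \<open>For an upward closed \<open>U\<close>, this is the monomial ideal spanned by the \<open>x\<^sup>c\<close>, \<open>c \<in> U\<close>.\<close>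
definition supp_ideal :: "nat \<Rightarrow> (nat \<Rightarrow> nat) set \<Rightarrow> ('a::comm_semiring_1) mps set" where
  "supp_ideal n U = {f \<in> ps_carrier n. \<forall>c. f c \<noteq> 0 \<longrightarrow> c \<in> U}"

definition up_closed :: "(nat \<Rightarrow> nat) set \<Rightarrow> bool" where
  "up_closed U \<longleftrightarrow> (\<forall>a b. a \<in> U \<longrightarrow> (\<forall>i. a i \<le> b i) \<longrightarrow> b \<in> U)"

definition up_closure :: "(nat \<Rightarrow> nat) set \<Rightarrow> (nat \<Rightarrow> nat) set" where
  "up_closure M = {c. \<exists>m\<in>M. \<forall>i. m i \<le> c i}"

lemma up_closed_up_closure: "up_closed (up_closure M)"
  unfolding up_closed_def up_closure_def
proof (intro allI impI)
  fix a b assume "a \<in> {c. \<exists>m\<in>M. \<forall>i. m i \<le> c i}" and ab: "\<forall>i. a i \<le> b i"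
  then obtain m where "m \<in> M" "\<forall>i. m i \<le> a i" by blast
  with ab have "m \<in> M \<and> (\<forall>i. m i \<le> b i)" by (blast intro: order_trans)
  then show "b \<in> {c. \<exists>m\<in>M. \<forall>i. m i \<le> c i}" by blast
qed

lemma up_closed_Un: "up_closed U \<Longrightarrow> up_closed V \<Longrightarrow> up_closed (U \<union> V)"
  unfolding up_closed_def by blast

lemma finite_support_exps: "c \<in> exps n \<Longrightarrow> finite_support c"
  unfolding exps_def finite_support_def
  by (rule finite_subset[of _ "{..<n}"]) (auto simp: not_less[symmetric])

lemma ps_carrier_subset_finite_support_series: "ps_carrier n \<subseteq> finite_support_series"
  unfolding ps_carrier_def finite_support_series_def exps_def
  using finite_support_exps[unfolded exps_def] by blast

lemma ps_carrier_support: "f \<in> ps_carrier n \<Longrightarrow> f c \<noteq> 0 \<Longrightarrow> c \<in> exps n"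
  unfolding ps_carrier_def exps_def by auto

lemma ps_term_in_ps_carrier: "c \<in> exps n \<Longrightarrow> ps_term a c \<in> ps_carrier n"
  unfolding ps_carrier_def ps_term_def exps_def by auto

lemma ps_mult_in_ps_carrier:
  assumes f: "f \<in> ps_carrier n" and g: "g \<in> ps_carrier n"
  shows "ps_mult f g \<in> ps_carrier n"
  unfolding ps_carrier_def
proof (intro CollectI allI impI)
  fix c :: "nat \<Rightarrow> nat" assume "\<exists>i\<ge>n. c i \<noteq> 0"
  then obtain i where i: "i \<ge> n" "c i \<noteq> 0" by blast
  show "ps_mult f g c = 0"
  proof (rule ccontr)
    assume "ps_mult f g c \<noteq> 0"
    then obtain a where "f a \<noteq> 0" "g (\<lambda>i. c i - a i) \<noteq> 0"
      by (rule ps_mult_nonzeroD)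
    then have "a \<in> exps n" "(\<lambda>i. c i - a i) \<in> exps n"
      using f g by (simp_all add: ps_carrier_support)
    then show False
      using i unfolding exps_def by auto
  qed
qed

lemma ps_pow_in_ps_carrier: "f \<in> ps_carrier n \<Longrightarrow> ps_pow f k \<in> ps_carrier n"
  by (induction k) (auto simp: ps_one_eq_term exps_def intro: ps_term_in_ps_carrier ps_mult_in_ps_carrier)

lemma ps_monom_in_supp_ideal_iff:
  "m \<in> exps n \<Longrightarrow> ps_monom m \<in> supp_ideal n U \<longleftrightarrow> m \<in> U"
  unfolding supp_ideal_def ps_monom_eq_term by (simp add: ps_term_in_ps_carrier) (simp add: ps_term_def)

lemma ps_is_ideal_supp_ideal:
  assumes "up_closed U" shows "ps_is_ideal n (supp_ideal n U :: 'a::comm_semiring_1 mps set)"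
  unfolding ps_is_ideal_def
proof (intro conjI ballI)
  show "supp_ideal n U \<subseteq> ps_carrier n" and "ps_zero \<in> supp_ideal n U"
    unfolding supp_ideal_def ps_zero_def ps_carrier_def by auto
  fix f g :: "'a mps" assume f: "f \<in> supp_ideal n U"
  show "ps_add f g \<in> supp_ideal n U" if g: "g \<in> supp_ideal n U"
  proof -
    have "ps_add f g \<in> ps_carrier n"
      using f g unfolding supp_ideal_def ps_carrier_def ps_add_def by auto
    moreover have "c \<in> U" if "ps_add f g c \<noteq> 0" for c
    proof -
      have "f c \<noteq> 0 \<or> g c \<noteq> 0"
        using that unfolding ps_add_def by auto
      then show ?thesis
        using f g unfolding supp_ideal_def by blast
    qed
    ultimately show ?thesis
      unfolding supp_ideal_def by blast
  qed
  show "ps_mult g f \<in> supp_ideal n U" if g: "g \<in> ps_carrier n"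
    unfolding supp_ideal_def
  proof (intro CollectI conjI allI impI)
    show "ps_mult g f \<in> ps_carrier n"
      using g f ps_mult_in_ps_carrier unfolding supp_ideal_def by blast
    fix c assume "ps_mult g f c \<noteq> 0"
    then obtain a where "a \<in> exps_le c" "f (\<lambda>i. c i - a i) \<noteq> 0"
      by (rule ps_mult_nonzeroD)
    then have "(\<lambda>i. c i - a i) \<in> U"
      using f unfolding supp_ideal_def by blast
    moreover have "\<forall>i. c i - a i \<le> c i"
      by simp
    ultimately show "c \<in> U"
      using assms unfolding up_closed_def by blast
  qed
qed

lemma ps_ideal_least: "ps_is_ideal n J \<Longrightarrow> G \<subseteq> J \<Longrightarrow> ps_ideal n G \<subseteq> J"
  unfolding ps_ideal_def by blast

lemma ps_ideal_mono: "G \<subseteq> G' \<Longrightarrow> ps_ideal n G \<subseteq> ps_ideal n G'"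
  unfolding ps_ideal_def by blast

text \<open>Induction on the generators: the terms of \<open>f\<close> divisible by \<open>x\<^sup>m\<close> form a multiple of \<open>x\<^sup>m\<close>,
  and the remaining terms are supported on the up-closure of the other generators.\<close>
lemma supp_ideal_up_closure_subset:
  assumes "finite M" "M \<subseteq> exps n" "ps_is_ideal n J" "ps_monom ` M \<subseteq> J"
  shows "supp_ideal n (up_closure M) \<subseteq> (J :: 'a::comm_semiring_1 mps set)"
  using assms
proof (induction M rule: finite_induct)
  case empty
  have "f = ps_zero" if "f \<in> supp_ideal n (up_closure {})" for f :: "'a mps"
    using that unfolding supp_ideal_def up_closure_def ps_zero_def by auto
  then show ?case
    using empty.prems(2) unfolding ps_is_ideal_def by blast
next
  case (insert m M)
  show ?case
  proof
    fix f :: "'a mps" assume f: "f \<in> supp_ideal n (up_closure (insert m M))"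
    define f1 where "f1 = (\<lambda>c. if \<forall>i. m i \<le> c i then f c else 0)"
    define f2 where "f2 = (\<lambda>c. if \<forall>i. m i \<le> c i then 0 else f c)"
    define h where "h = (\<lambda>d. f (\<lambda>i. d i + m i))"
    have fc: "f \<in> ps_carrier n"
      using f unfolding supp_ideal_def by auto
    have "f2 \<in> supp_ideal n (up_closure M)"
      using f unfolding supp_ideal_def f2_def up_closure_def ps_carrier_def by auto
    then have f2: "f2 \<in> J"
      using insert by auto
    have hc: "h \<in> ps_carrier n"
      unfolding ps_carrier_def h_def
    proof (intro CollectI allI impI)
      fix d :: "nat \<Rightarrow> nat" assume "\<exists>i\<ge>n. d i \<noteq> 0"
      then have "\<exists>i\<ge>n. d i + m i \<noteq> 0" by auto
      then show "f (\<lambda>i. d i + m i) = 0"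
        using fc unfolding ps_carrier_def by simp
    qed
    have "f1 = ps_mult h (ps_monom m)"
    proof
      fix c
      have "(\<forall>i. m i \<le> c i) \<Longrightarrow> (\<lambda>i. c i - m i + m i) = c"
        by (auto simp: fun_eq_iff)
      moreover have "finite_support m"
        using insert.prems(1) finite_support_exps by blast
      moreover have "h \<in> finite_support_series"
        using hc ps_carrier_subset_finite_support_series by blast
      ultimately show "f1 c = ps_mult h (ps_monom m) c"
        unfolding ps_monom_eq_term by (subst ps_mult_term_right) (auto simp: f1_def h_def)
    qed
    then have "f1 \<in> J"
      using hc insert.prems(2,3) unfolding ps_is_ideal_def by auto
    moreover have "f = ps_add f1 f2"
      unfolding f1_def f2_def ps_add_def by auto
    ultimately show "f \<in> J"
      using f2 insert.prems(2) unfolding ps_is_ideal_def by simp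
  qed
qed

lemma ps_ideal_monoms:
  assumes "finite M" "M \<subseteq> exps n"
  shows "ps_ideal n (ps_monom ` M) = (supp_ideal n (up_closure M) :: 'a :: comm_semiring_1 mps set)"
proof
  have "ps_monom ` M \<subseteq> (supp_ideal n (up_closure M) :: 'a mps set)"
    using assms(2) by (auto intro!: ps_monom_in_supp_ideal_iff[THEN iffD2] simp: up_closure_def)
  then show "ps_ideal n (ps_monom ` M) \<subseteq> (supp_ideal n (up_closure M) :: 'a mps set)"
    by (intro ps_ideal_least ps_is_ideal_supp_ideal up_closed_up_closure)
  show "supp_ideal n (up_closure M) \<subseteq> (ps_ideal n (ps_monom ` M) :: 'a mps set)"
    using supp_ideal_up_closure_subset[OF assms] unfolding ps_ideal_def by blast
qed

lemma ps_ideal_sum_supp_ideal: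
  assumes "up_closed U" "up_closed V"
  shows "ps_ideal_sum n (supp_ideal n U) (supp_ideal n V) =
    (supp_ideal n (U \<union> V) :: 'a :: comm_semiring_1 mps set)"
  unfolding ps_ideal_sum_def
proof
  show "ps_ideal n (supp_ideal n U \<union> supp_ideal n V) \<subseteq> (supp_ideal n (U \<union> V) :: 'a mps set)"
    by (intro ps_ideal_least ps_is_ideal_supp_ideal up_closed_Un assms) (auto simp: supp_ideal_def)
  show "supp_ideal n (U \<union> V) \<subseteq> (ps_ideal n (supp_ideal n U \<union> supp_ideal n V) :: 'a mps set)"
  proof
    fix f :: "'a mps" assume f: "f \<in> supp_ideal n (U \<union> V)"
    define f1 where "f1 = (\<lambda>c. if c \<in> U then f c else 0)"
    define f2 where "f2 = (\<lambda>c. if c \<in> U then 0 else f c)"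
    have "f1 \<in> supp_ideal n U" "f2 \<in> supp_ideal n V"
      using f unfolding f1_def f2_def supp_ideal_def ps_carrier_def by auto
    moreover have "f = ps_add f1 f2"
      unfolding f1_def f2_def ps_add_def by auto
    ultimately show "f \<in> ps_ideal n (supp_ideal n U \<union> supp_ideal n V)"
      unfolding ps_ideal_def ps_is_ideal_def by blast
  qed
qed

lemma ps_frob_supp_ideal:
  assumes p: "prime CHAR('a)" and M: "finite M" "M \<subseteq> exps n"
  shows "ps_frob n (CHAR('a) ^ e) (supp_ideal n (up_closure M)) =
    (supp_ideal n (up_closure ((\<lambda>m i. CHAR('a) ^ e * m i) ` M)) :: 'a :: comm_semiring_1 mps set)"
    (is "ps_frob n ?q ?I = supp_ideal n (up_closure ?qM)")
proof
  have "ps_pow f ?q \<in> supp_ideal n (up_closure ?qM)" if f: "f \<in> ?I" for f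
  proof -
    have fc: "f \<in> ps_carrier n"
      using f unfolding supp_ideal_def by auto
    have "c \<in> up_closure ?qM" if "ps_pow f ?q c \<noteq> 0" for c
    proof -
      obtain d where d: "c = (\<lambda>i. ?q * d i)" "f d \<noteq> 0"
        using ps_pow_char_power_nonzeroD[OF _ p \<open>ps_pow f ?q c \<noteq> 0\<close>] fc
          ps_carrier_subset_finite_support_series by blast
      then obtain m where "m \<in> M" "\<forall>i. m i \<le> d i"
        using f unfolding supp_ideal_def up_closure_def by blast
      then show ?thesis
        unfolding up_closure_def d by auto
    qed
    then show ?thesis
      unfolding supp_ideal_def using ps_pow_in_ps_carrier fc by blast
  qed
  then show "ps_frob n ?q ?I \<subseteq> supp_ideal n (up_closure ?qM)"
    unfolding ps_frob_def by (intro ps_ideal_least ps_is_ideal_supp_ideal up_closed_up_closure) blast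
  have "ps_monom ` ?qM \<subseteq> {ps_pow f ?q | f. f \<in> ?I}"
  proof
    fix x :: "'a mps" assume "x \<in> ps_monom ` ?qM"
    then obtain m where m: "m \<in> M" and x: "x = ps_monom (\<lambda>i. ?q * m i)" by blast
    have mn: "m \<in> exps n"
      using m M by auto
    have "m \<in> up_closure M"
      using m unfolding up_closure_def by auto
    then have "ps_monom m \<in> ?I"
      using mn by (simp add: ps_monom_in_supp_ideal_iff)
    moreover have "x = ps_pow (ps_monom m) ?q"
      using mn by (simp add: x ps_pow_monom finite_support_exps)
    ultimately show "x \<in> {ps_pow f ?q | f. f \<in> ?I}"
      by blast
  qed
  then have "ps_ideal n (ps_monom ` ?qM) \<subseteq> ps_frob n ?q ?I"
    unfolding ps_frob_def by (rule ps_ideal_mono)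
  moreover have "?qM \<subseteq> exps n"
    using M unfolding exps_def by auto
  ultimately show "supp_ideal n (up_closure ?qM) \<subseteq> ps_frob n ?q ?I"
    using M by (simp add: ps_ideal_monoms)
qed

lemma ps_colon_supp_ideal:
  assumes U: "up_closed U" and G: "G \<subseteq> exps n"
  shows "ps_colon n (supp_ideal n U) (supp_ideal n (up_closure G)) =
    (supp_ideal n {c. \<forall>m\<in>G. (\<lambda>i. c i + m i) \<in> U} :: 'a :: comm_semiring_1 mps set)"
proof
  show "ps_colon n (supp_ideal n U) (supp_ideal n (up_closure G)) \<subseteq>
    (supp_ideal n {c. \<forall>m\<in>G. (\<lambda>i. c i + m i) \<in> U} :: 'a mps set)"
  proof
    fix f :: "'a mps" assume f: "f \<in> ps_colon n (supp_ideal n U) (supp_ideal n (up_closure G))"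
    then have fc: "f \<in> ps_carrier n"
      unfolding ps_colon_def by auto
    have "(\<lambda>i. c i + m i) \<in> U" if c: "f c \<noteq> 0" and m: "m \<in> G" for c m
    proof -
      have "m \<in> exps n"
        using m G by auto
      then have "ps_monom m \<in> (supp_ideal n (up_closure G) :: 'a mps set)"
        using m by (auto simp: ps_monom_in_supp_ideal_iff up_closure_def)
      moreover have "ps_mult f (ps_monom m) (\<lambda>i. c i + m i) = f c"
        unfolding ps_monom_eq_term using fc ps_carrier_subset_finite_support_series \<open>m \<in> exps n\<close>
        by (subst ps_mult_term_right) (auto simp: finite_support_exps)
      ultimately show ?thesis
        using f c unfolding ps_colon_def supp_ideal_def by auto
    qed
    then show "f \<in> supp_ideal n {c. \<forall>m\<in>G. (\<lambda>i. c i + m i) \<in> U}"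
      using fc unfolding supp_ideal_def by auto
  qed
  show "(supp_ideal n {c. \<forall>m\<in>G. (\<lambda>i. c i + m i) \<in> U} :: 'a mps set) \<subseteq>
    ps_colon n (supp_ideal n U) (supp_ideal n (up_closure G))"
  proof
    fix f :: "'a mps" assume f: "f \<in> supp_ideal n {c. \<forall>m\<in>G. (\<lambda>i. c i + m i) \<in> U}"
    have "ps_mult f g \<in> supp_ideal n U" if g: "g \<in> supp_ideal n (up_closure G)" for g
    proof -
      have "ps_mult f g \<in> ps_carrier n"
        using f g ps_mult_in_ps_carrier unfolding supp_ideal_def by auto
      moreover have "d \<in> U" if "ps_mult f g d \<noteq> 0" for d
      proof -
        obtain a where a: "a \<in> exps_le d" "f a \<noteq> 0" "g (\<lambda>i. d i - a i) \<noteq> 0"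
          using \<open>ps_mult f g d \<noteq> 0\<close> by (rule ps_mult_nonzeroD)
        then obtain m where m: "m \<in> G" "\<forall>i. m i \<le> d i - a i"
          using g unfolding supp_ideal_def up_closure_def by auto
        have "(\<lambda>i. a i + m i) \<in> U"
          using f a m unfolding supp_ideal_def by auto
        moreover have "\<forall>i. a i + m i \<le> d i"
          using a(1) m(2) by (simp add: le_diff_conv2 add.commute)
        ultimately show "d \<in> U"
          using U unfolding up_closed_def by blast
      qed
      ultimately show ?thesis
        unfolding supp_ideal_def by blast
    qed
    then show "f \<in> ps_colon n (supp_ideal n U) (supp_ideal n (up_closure G))"
      using f unfolding ps_colon_def supp_ideal_def by auto
  qed
qed

lemma ps_Inter_supp_ideal:
  "ps_Inter n ((\<lambda>a. supp_ideal n (R a)) ` A) = supp_ideal n (\<Inter>a\<in>A. R a)"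
  unfolding ps_Inter_def supp_ideal_def by auto

lemma supp_ideal_eq_iff:
  "supp_ideal n U = (supp_ideal n V :: 'a::comm_semiring_1 mps set) \<longleftrightarrow>
    U \<inter> exps n = V \<inter> exps n"
proof
  assume eq: "supp_ideal n U = (supp_ideal n V :: 'a mps set)"
  have "c \<in> U \<longleftrightarrow> c \<in> V" if "c \<in> exps n" for c
    using ps_monom_in_supp_ideal_iff[OF that, of U, where 'a='a]
          ps_monom_in_supp_ideal_iff[OF that, of V, where 'a='a] eq by simp
  then show "U \<inter> exps n = V \<inter> exps n"
    by blast
next
  assume "U \<inter> exps n = V \<inter> exps n"
  then show "supp_ideal n U = (supp_ideal n V :: 'a mps set)"
    unfolding supp_ideal_def using ps_carrier_support by blast
qed

section \<open>Face ideals\<close>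

text \<open>The exponents of the monomials in \<open>I\<^sub>\<alpha>\<^sup>[\<^sup>q\<^sup>]\<close>.\<close>
definition face_exps :: "nat \<Rightarrow> (nat \<Rightarrow> nat) \<Rightarrow> nat \<Rightarrow> (nat \<Rightarrow> nat) set" where
  "face_exps n \<alpha> q = {c. \<exists>i<n. \<alpha> i \<noteq> 0 \<and> q \<le> c i}"

definition face_vars :: "nat \<Rightarrow> (nat \<Rightarrow> nat) \<Rightarrow> (nat \<Rightarrow> nat) set" where
  "face_vars n \<alpha> = (\<lambda>i j. if j = i then 1 else 0) ` {i. i < n \<and> \<alpha> i \<noteq> 0}"

lemma finite_face_vars: "finite (face_vars n \<alpha>)"
  unfolding face_vars_def by simp

lemma face_vars_subset_exps: "face_vars n \<alpha> \<subseteq> exps n"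
  unfolding face_vars_def exps_def by auto

lemma up_closure_scaled_face_vars:
  "up_closure ((\<lambda>m i. q * m i) ` face_vars n \<alpha>) = face_exps n \<alpha> q"
  unfolding up_closure_def face_vars_def face_exps_def by auto

lemma face_ideal_eq_supp_ideal:
  "face_ideal n \<alpha> = (supp_ideal n (up_closure (face_vars n \<alpha>)) :: 'a::comm_semiring_1 mps set)"
proof -
  have "{ps_var i | i. i < n \<and> \<alpha> i \<noteq> 0} = (ps_monom ` face_vars n \<alpha> :: 'a mps set)"
    unfolding face_vars_def ps_var_def by auto
  then show ?thesis
    unfolding face_ideal_def by (simp add: ps_ideal_monoms finite_face_vars face_vars_subset_exps)
qed

lemma face_ideal_eq_supp_ideal_face_exps:
  "face_ideal n \<alpha> = (supp_ideal n (face_exps n \<alpha> 1) :: 'a::comm_semiring_1 mps set)"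
  using up_closure_scaled_face_vars[of 1 n \<alpha>] by (simp add: face_ideal_eq_supp_ideal)

lemma ps_frob_face_ideal:
  assumes "prime CHAR('a)"
  shows "ps_frob n (CHAR('a) ^ e) (face_ideal n \<alpha>) =
    (supp_ideal n (face_exps n \<alpha> (CHAR('a) ^ e)) :: 'a::comm_semiring_1 mps set)"
  unfolding face_ideal_eq_supp_ideal
  by (simp add: ps_frob_supp_ideal[OF assms] finite_face_vars face_vars_subset_exps
                up_closure_scaled_face_vars)

lemma up_closed_face_exps: "up_closed (face_exps n \<alpha> q)"
  using up_closed_up_closure up_closure_scaled_face_vars by metis

lemma ps_ideal_monom_power:
  assumes "\<alpha> \<in> exps n"
  shows "ps_ideal n {ps_pow (ps_monom \<alpha>) k} =
    (supp_ideal n (up_closure {\<lambda>i. k * \<alpha> i}) :: 'a::comm_semiring_1 mps set)"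
proof -
  have "{\<lambda>i. k * \<alpha> i} \<subseteq> exps n"
    using assms unfolding exps_def by auto
  then show ?thesis
    using assms ps_ideal_monoms[of "{\<lambda>i. k * \<alpha> i}" n]
    by (simp add: ps_pow_monom finite_support_exps)
qed

lemma is01_in_exps: "is01 n \<alpha> \<Longrightarrow> \<alpha> \<in> exps n"
  unfolding is01_def exps_def by auto

lemma is01_nonzero: "is01 n \<alpha> \<Longrightarrow> \<alpha> i \<noteq> 0 \<Longrightarrow> \<alpha> i = 1 \<and> i < n"
  unfolding is01_def by (metis le_antisym less_one not_le)

lemma finite_is01: "finite {\<alpha>. is01 n \<alpha>}"
proof -
  have "{\<alpha>. is01 n \<alpha>} \<subseteq> (\<lambda>S i. if i \<in> S then 1 else 0) ` Pow {..<n}"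
  proof
    fix \<alpha> assume "\<alpha> \<in> {\<alpha>. is01 n \<alpha>}"
    then have "\<alpha> = (\<lambda>i. if i \<in> {i. i < n \<and> \<alpha> i \<noteq> 0} then 1 else 0)"
      unfolding is01_def by (force simp: fun_eq_iff not_less le_Suc_eq)
    then show "\<alpha> \<in> (\<lambda>S i. if i \<in> S then 1 else 0) ` Pow {..<n}"
      by blast
  qed
  then show ?thesis
    by (rule finite_subset) simp
qed

section \<open>The colon ideal of a squarefree monomial ideal\<close>

text \<open>\<open>G\<close> is the set of squarefree generators and \<open>A\<close> the set of faces of an irredundant
  decomposition, both read as sets of exponents.\<close>
locale squarefree_decomposition =
  fixes n :: nat and G A :: "(nat \<Rightarrow> nat) set"
  assumes gens_is01: "g \<in> G \<Longrightarrow> is01 n g"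
    and faces_is01: "\<alpha> \<in> A \<Longrightarrow> is01 n \<alpha>"
    and decomposition: "up_closure G \<inter> exps n = (\<Inter>\<alpha>\<in>A. face_exps n \<alpha> 1) \<inter> exps n"
    and irredundant: "\<beta> \<in> A \<Longrightarrow>
      (\<Inter>\<alpha>\<in>A - {\<beta>}. face_exps n \<alpha> 1) \<inter> exps n \<noteq> up_closure G \<inter> exps n"
begin

lemma in_up_closure_iff:
  "c \<in> exps n \<Longrightarrow> c \<in> up_closure G \<longleftrightarrow> (\<forall>\<alpha>\<in>A. c \<in> face_exps n \<alpha> 1)"
  using decomposition by blast

lemma gen_in_face_exps: "g \<in> G \<Longrightarrow> \<alpha> \<in> A \<Longrightarrow> g \<in> face_exps n \<alpha> 1"
  using in_up_closure_iff[of g] gens_is01[THEN is01_in_exps] by (auto simp: up_closure_def)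

lemma irredundant_witness:
  assumes "\<beta> \<in> A"
  obtains w where "w \<in> exps n" "\<forall>\<alpha>\<in>A - {\<beta>}. w \<in> face_exps n \<alpha> 1" "w \<notin> face_exps n \<beta> 1"
proof -
  obtain w where "w \<in> exps n" and "w \<in> (\<Inter>\<alpha>\<in>A - {\<beta>}. face_exps n \<alpha> 1) \<longleftrightarrow> w \<notin> up_closure G"
    using irredundant[OF assms] by blast
  then show thesis
    using that in_up_closure_iff assms by blast
qed

text \<open>If \<open>c\<close> fails the condition for the face \<open>\<beta>\<close>, say at the variable \<open>j\<close>, the witness of
  irredundancy for \<open>\<beta>\<close>, enlarged by \<open>x\<^sub>j\<close>, yields a generator \<open>m\<close> with \<open>x\<^sup>c x\<^sup>m \<notin> I\<^sup>[\<^sup>q\<^sup>]\<close>.\<close>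
lemma colon_exps_imp_face_condition:
  assumes c: "c \<in> exps n" and colon: "\<forall>m\<in>G. (\<lambda>i. c i + m i) \<in> up_closure ((\<lambda>m i. q * m i) ` G)"
    and \<beta>: "\<beta> \<in> A"
  shows "c \<in> face_exps n \<beta> q \<or> (\<forall>i. (q - 1) * \<beta> i \<le> c i)"
proof (rule ccontr)
  assume "\<not> ?thesis"
  then obtain j where c_low: "c \<notin> face_exps n \<beta> q" and j: "c j < (q - 1) * \<beta> j"
    by (auto simp: not_le)
  have "\<beta> j \<noteq> 0"
    using j by (cases "\<beta> j = 0") auto
  then have \<beta>j: "\<beta> j = 1" "j < n"
    using is01_nonzero[OF faces_is01[OF \<beta>]] by auto
  obtain w where w: "w \<in> exps n" "\<forall>\<alpha>\<in>A - {\<beta>}. w \<in> face_exps n \<alpha> 1" "w \<notin> face_exps n \<beta> 1"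
    using irredundant_witness[OF \<beta>] .
  define w' where "w' = (\<lambda>i. if i < n \<and> (w i \<noteq> 0 \<or> i = j) then 1 else (0::nat))"
  have "w' \<in> exps n"
    unfolding w'_def exps_def by auto
  moreover have "w' \<in> face_exps n \<alpha> 1" if \<alpha>: "\<alpha> \<in> A" for \<alpha>
  proof (cases "\<alpha> = \<beta>")
    case True
    have "w' j = 1"
      using \<beta>j by (simp add: w'_def)
    then show ?thesis
      using True \<beta>j unfolding face_exps_def by (intro CollectI exI[of _ j]) simp
  next
    case False
    then obtain i where "i < n" "\<alpha> i \<noteq> 0" "1 \<le> w i"
      using w(2) \<alpha> unfolding face_exps_def by blast
    then show ?thesis
      unfolding face_exps_def w'_def by (intro CollectI exI[of _ i]) simp
  qed
  ultimately have "w' \<in> up_closure G"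
    by (simp add: in_up_closure_iff)
  then obtain m where m: "m \<in> G" "\<forall>i. m i \<le> w' i"
    unfolding up_closure_def by blast
  then have "(\<lambda>i. c i + m i) \<in> up_closure ((\<lambda>m i. q * m i) ` G)"
    using colon by blast
  then obtain g where g: "g \<in> G" "\<forall>i. q * g i \<le> c i + m i"
    unfolding up_closure_def by auto
  then obtain i where i: "i < n" "\<beta> i \<noteq> 0" "1 \<le> g i"
    using gen_in_face_exps[OF _ \<beta>] unfolding face_exps_def by blast
  then have "q \<le> q * g i"
    by simp
  then have "q \<le> c i + m i"
    using g(2) order_trans by blast
  moreover have "c i < q"
    using c_low i unfolding face_exps_def by auto
  moreover have "w i = 0"
    using w(3) i unfolding face_exps_def by auto
  ultimately have "i = j" "m i = 1"
    using m(2)[rule_format, of i] unfolding w'_def by (auto split: if_splits)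
  then show False
    using \<open>q \<le> c i + m i\<close> j \<beta>j by simp
qed

text \<open>Conversely, the variables in which \<open>x\<^sup>c x\<^sup>m\<close> reaches degree \<open>q\<close> meet every face, hence carry a
  squarefree generator.\<close>
lemma face_condition_imp_colon_exps:
  assumes q: "q \<ge> 1" and c: "c \<in> exps n"
    and faces: "\<forall>\<alpha>\<in>A. c \<in> face_exps n \<alpha> q \<or> (\<forall>i. (q - 1) * \<alpha> i \<le> c i)" and m: "m \<in> G"
  shows "(\<lambda>i. c i + m i) \<in> up_closure ((\<lambda>m i. q * m i) ` G)"
proof -
  define \<tau> where "\<tau> = (\<lambda>i. if i < n \<and> q \<le> c i + m i then 1 else (0::nat))"
  have "\<tau> \<in> face_exps n \<alpha> 1" if \<alpha>: "\<alpha> \<in> A" for \<alpha>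
  proof (cases "c \<in> face_exps n \<alpha> q")
    case True
    then obtain i where "i < n" "\<alpha> i \<noteq> 0" "q \<le> c i"
      unfolding face_exps_def by blast
    then show ?thesis
      unfolding face_exps_def \<tau>_def by (intro CollectI exI[of _ i]) simp
  next
    case False
    then have \<alpha>_le: "\<forall>i. (q - 1) * \<alpha> i \<le> c i"
      using faces \<alpha> by blast
    obtain i where i: "i < n" "\<alpha> i \<noteq> 0" "1 \<le> m i"
      using gen_in_face_exps[OF m \<alpha>] unfolding face_exps_def by blast
    then have "\<alpha> i = 1"
      using is01_nonzero[OF faces_is01[OF \<alpha>]] by blast
    then have "q \<le> c i + m i"
      using \<alpha>_le[rule_format, of i] i(3) q by simp
    then show ?thesis
      using i unfolding face_exps_def \<tau>_def by (intro CollectI exI[of _ i]) simp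
  qed
  moreover have "\<tau> \<in> exps n"
    unfolding \<tau>_def exps_def by auto
  ultimately have "\<tau> \<in> up_closure G"
    by (simp add: in_up_closure_iff)
  then obtain g where g: "g \<in> G" "\<forall>i. g i \<le> \<tau> i"
    unfolding up_closure_def by blast
  have "q * g i \<le> c i + m i" for i
  proof (cases "g i = 0")
    case False
    then have "g i = 1"
      using is01_nonzero[OF gens_is01[OF g(1)]] by blast
    moreover have "\<tau> i \<noteq> 0"
      using False g(2)[rule_format, of i] by (metis le_0_eq)
    then have "q \<le> c i + m i"
      unfolding \<tau>_def by (simp split: if_splits)
    ultimately show ?thesis
      by simp
  qed simp
  then show ?thesis
    using g(1) unfolding up_closure_def by (intro CollectI bexI[of _ "\<lambda>i. q * g i"]) auto
qed

lemma colon_exps_eq: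
  assumes "q \<ge> 1"
  shows "{c. \<forall>m\<in>G. (\<lambda>i. c i + m i) \<in> up_closure ((\<lambda>m i. q * m i) ` G)} \<inter> exps n =
    (\<Inter>\<alpha>\<in>A. face_exps n \<alpha> q \<union> up_closure {\<lambda>i. (q - 1) * \<alpha> i}) \<inter> exps n"
  using colon_exps_imp_face_condition face_condition_imp_colon_exps[OF assms]
  by (auto simp: up_closure_def)

end

lemma frob_face_ideal_plus_monom_power:
  assumes "prime CHAR('a)" "\<alpha> \<in> exps n"
  shows "ps_ideal_sum n (ps_frob n (CHAR('a) ^ e) (face_ideal n \<alpha>))
           (ps_ideal n {ps_pow (ps_monom \<alpha>) (CHAR('a) ^ e - 1)}) =
    (supp_ideal n (face_exps n \<alpha> (CHAR('a) ^ e) \<union> up_closure {\<lambda>i. (CHAR('a) ^ e - 1) * \<alpha> i})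
      :: 'a::comm_semiring_1 mps set)"
  using assms
  by (simp add: ps_frob_face_ideal ps_ideal_monom_power ps_ideal_sum_supp_ideal up_closed_face_exps
                up_closed_up_closure)

lemma ps_Inter_frob_face_ideals_plus_monom_powers:
  assumes p: "prime CHAR('a)" and A: "A \<subseteq> exps n"
  shows "ps_Inter n ((\<lambda>\<alpha>. ps_ideal_sum n (ps_frob n (CHAR('a) ^ e) (face_ideal n \<alpha>))
                                  (ps_ideal n {ps_pow (ps_monom \<alpha>) (CHAR('a) ^ e - 1)})) ` A) =
    (supp_ideal n (\<Inter>\<alpha>\<in>A. face_exps n \<alpha> (CHAR('a) ^ e) \<union> up_closure {\<lambda>i. (CHAR('a) ^ e - 1) * \<alpha> i})
      :: 'a::comm_semiring_1 mps set)"
  unfolding ps_Inter_supp_ideal[symmetric]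
proof (intro arg_cong[where f="ps_Inter n"] image_cong[OF refl])
  fix \<alpha> assume "\<alpha> \<in> A"
  with A show "ps_ideal_sum n (ps_frob n (CHAR('a) ^ e) (face_ideal n \<alpha>))
      (ps_ideal n {ps_pow (ps_monom \<alpha>) (CHAR('a) ^ e - 1)}) =
    (supp_ideal n (face_exps n \<alpha> (CHAR('a) ^ e) \<union> up_closure {\<lambda>i. (CHAR('a) ^ e - 1) * \<alpha> i})
      :: 'a mps set)"
    by (intro frob_face_ideal_plus_monom_power[OF p]) blast
qed

theorem proposition3p2:
  fixes n :: nat and e :: nat
    and I :: "('k::field) mps set"
    and A :: "(nat \<Rightarrow> nat) set"
  assumes char_pos: "CHAR('k) > 0"
    and sqfree: "sqfree_monomial_ideal n I"
    and finA: "finite A"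
    and A01: "\<forall>\<alpha>\<in>A. is01 n \<alpha>"
    and decomp: "I = ps_Inter n ((\<lambda>\<alpha>. face_ideal n \<alpha>) ` A)"
    and irredundant: "\<forall>\<beta>\<in>A. ps_Inter n ((\<lambda>\<alpha>. face_ideal n \<alpha>) ` (A - {\<beta>})) \<noteq> I"
  shows "ps_colon n (ps_frob n (CHAR('k) ^ e) I) I =
         ps_Inter n ((\<lambda>\<alpha>. ps_ideal_sum n (ps_frob n (CHAR('k) ^ e) (face_ideal n \<alpha>))
                                       (ps_ideal n {ps_pow (ps_monom \<alpha>) (CHAR('k) ^ e - 1)})) ` A)"
proof -
  have p: "prime CHAR('k)"
    using char_pos by (rule prime_CHAR_semidom)
  obtain G where G01: "\<forall>g\<in>G. is01 n g" and IG: "I = ps_ideal n (ps_monom ` G)"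
    using sqfree unfolding sqfree_monomial_ideal_def by blast
  have G: "finite G" "G \<subseteq> exps n"
    using G01 finite_subset[OF _ finite_is01] is01_in_exps by blast+
  have I: "I = supp_ideal n (up_closure G)"
    using IG G by (simp add: ps_ideal_monoms)
  have faces: "ps_Inter n (face_ideal n ` B) = (supp_ideal n (\<Inter>\<alpha>\<in>B. face_exps n \<alpha> 1) :: 'k mps set)"
    for B
    by (simp add: face_ideal_eq_supp_ideal_face_exps ps_Inter_supp_ideal)
  interpret squarefree_decomposition n G A
    using G01 A01 decomp irredundant unfolding I faces supp_ideal_eq_iff
    by unfold_locales blast+
  have "ps_colon n (ps_frob n (CHAR('k) ^ e) I) I =
    supp_ideal n {c. \<forall>m\<in>G. (\<lambda>i. c i + m i) \<in> up_closure ((\<lambda>m i. CHAR('k) ^ e * m i) ` G)}"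
    unfolding I using p G by (simp add: ps_frob_supp_ideal ps_colon_supp_ideal up_closed_up_closure)
  also have "\<dots> = supp_ideal n (\<Inter>\<alpha>\<in>A. face_exps n \<alpha> (CHAR('k) ^ e) \<union>
                                          up_closure {\<lambda>i. (CHAR('k) ^ e - 1) * \<alpha> i})"
    unfolding supp_ideal_eq_iff using char_pos by (intro colon_exps_eq) simp
  also have "\<dots> = ps_Inter n ((\<lambda>\<alpha>. ps_ideal_sum n (ps_frob n (CHAR('k) ^ e) (face_ideal n \<alpha>))
                                       (ps_ideal n {ps_pow (ps_monom \<alpha>) (CHAR('k) ^ e - 1)})) ` A)"
    using p A01 is01_in_exps by (subst ps_Inter_frob_face_ideals_plus_monom_powers) auto
  finally show ?thesis .
qed

end
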